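(* Let $\varphi:A^\bullet\to B^\bullet$ and $\psi:B^\bullet\to C^\bullet$ be (continuous) homomorphisms of complexes of Abelian topological groups. (a) If $\varphi$ and $\psi$ are quasi-open, then so is $\psi\varphi$. (b) If $\psi$ is a topological embedding and the zero homomorphism $0^\bullet\to C^\bullet/\psi B^\bullet$ is quasi-open, then $\psi$ is quasi-open; and if in addition $\psi\varphi$ is quasi-open, then $\varphi$ is quasi-open.
   Context: Complexes are $\mathbb Z$-graded complexes of Abelian topological groups with continuous differentials; homomorphisms are continuous chain maps. For a complex $A^\bullet$ with differential $d_A$, $Z^n(A^\bullet)=\ker(d_A|A^n)$ with the subspace topology. A homomorphism $\varphi:A^\bullet\to B^\bullet$ is quasi-open if for every $n$ the homomorphism $\varphi'^n:Z^n(A^\bullet)\oplus B^{n-1}\to Z^n(B^\bullet)$, $(a,b)\mapsto\varphi a-d_Bb$, is open. $C^\bullet/\psi B^\bullet$ carries the quotient topology and induced differential, and $0^\bullet$ denotes the zero complex. *)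

theory Defs
  imports "HOL-Analysis.Analysis" "HOL-Algebra.Coset"
begin

definition ab_top_group :: "'a monoid \<Rightarrow> 'a topology \<Rightarrow> bool" where
  "ab_top_group G T \<longleftrightarrow> comm_group G \<and> topspace T = carrier G
     \<and> continuous_map (prod_topology T T) T (\<lambda>(x,y). x \<otimes>\<^bsub>G\<^esub> y)
     \<and> continuous_map T T (\<lambda>x. inv\<^bsub>G\<^esub> x)"

record 'a cplx =
  grp :: "int \<Rightarrow> 'a monoid"
  top :: "int \<Rightarrow> 'a topology"
  dif :: "int \<Rightarrow> 'a \<Rightarrow> 'a"

definition is_complex :: "'a cplx \<Rightarrow> bool" where
  "is_complex A \<longleftrightarrow> (\<forall>n. ab_top_group (grp A n) (top A n)
     \<and> dif A n \<in> hom (grp A n) (grp A (n+1))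
     \<and> continuous_map (top A n) (top A (n+1)) (dif A n)
     \<and> (\<forall>x \<in> carrier (grp A n). dif A (n+1) (dif A n x) = \<one>\<^bsub>grp A (n+2)\<^esub>))"

definition cplx_hom :: "'a cplx \<Rightarrow> 'b cplx \<Rightarrow> (int \<Rightarrow> 'a \<Rightarrow> 'b) \<Rightarrow> bool" where
  "cplx_hom A B f \<longleftrightarrow> (\<forall>n. f n \<in> hom (grp A n) (grp B n)
     \<and> continuous_map (top A n) (top B n) (f n)
     \<and> (\<forall>x \<in> carrier (grp A n). f (n+1) (dif A n x) = dif B n (f n x)))"

definition cycles :: "'a cplx \<Rightarrow> int \<Rightarrow> 'a set" where
  "cycles A n = {x \<in> carrier (grp A n). dif A n x = \<one>\<^bsub>grp A (n+1)\<^esub>}"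

text \<open>The map \<phi>'^n : Z^n(A) + B^{n-1} \<rightarrow> Z^n(B), (a,b) \<mapsto> \<phi> a - d_B b, and quasi-openness.\<close>
definition quasi_open :: "'a cplx \<Rightarrow> 'b cplx \<Rightarrow> (int \<Rightarrow> 'a \<Rightarrow> 'b) \<Rightarrow> bool" where
  "quasi_open A B f \<longleftrightarrow> (\<forall>n.
     open_map (prod_topology (subtopology (top A n) (cycles A n)) (top B (n-1)))
              (subtopology (top B n) (cycles B n))
              (\<lambda>(a,b). f n a \<otimes>\<^bsub>grp B n\<^esub> inv\<^bsub>grp B n\<^esub> (dif B (n-1) b)))"

definition cplx_comp :: "(int \<Rightarrow> 'b \<Rightarrow> 'c) \<Rightarrow> (int \<Rightarrow> 'a \<Rightarrow> 'b) \<Rightarrow> int \<Rightarrow> 'a \<Rightarrow> 'c" where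
  "cplx_comp g f = (\<lambda>n. g n \<circ> f n)"

definition quot_topology :: "'a topology \<Rightarrow> ('a \<Rightarrow> 'b) \<Rightarrow> 'b topology" where
  "quot_topology X f = topology (\<lambda>U. U \<subseteq> f ` topspace X \<and> openin X {x \<in> topspace X. f x \<in> U})"

definition quot_cplx :: "'c cplx \<Rightarrow> 'b cplx \<Rightarrow> (int \<Rightarrow> 'b \<Rightarrow> 'c) \<Rightarrow> 'c set cplx" where
  "quot_cplx C B g = \<lparr> grp = (\<lambda>n. grp C n Mod (g n ` carrier (grp B n))),
     top = (\<lambda>n. quot_topology (top C n) (\<lambda>x. (g n ` carrier (grp B n)) #>\<^bsub>grp C n\<^esub> x)),
     dif = (\<lambda>n U. (g (n+1) ` carrier (grp B (n+1))) #>\<^bsub>grp C (n+1)\<^esub> dif C n (SOME x. x \<in> U)) \<rparr>"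

definition zero_cplx :: "unit cplx" where
  "zero_cplx = \<lparr> grp = (\<lambda>n. \<lparr> carrier = {()}, mult = (\<lambda>_ _. ()), one = () \<rparr>),
     top = (\<lambda>n. discrete_topology {()}), dif = (\<lambda>n _. ()) \<rparr>"

definition zero_hom :: "'a cplx \<Rightarrow> int \<Rightarrow> unit \<Rightarrow> 'a" where
  "zero_hom C = (\<lambda>n _. \<one>\<^bsub>grp C n\<^esub>)"

end

theory Submission
  imports Defs
begin

text \<open>Quasi-openness can be tested at the unit: \<open>\<phi>'\<^sup>n\<close> is a homomorphism and translations are
  homeomorphisms, so it is open iff it maps \<open>(U \<inter> Z\<^sup>n(A)) \<times> V\<close> onto a neighbourhood of the unit in
  \<open>Z\<^sup>n(B)\<close> for all neighbourhoods \<open>U\<close>, \<open>V\<close> of the units.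
  For (a), a small cycle of \<open>C\<close> is \<open>\<psi>y - dc\<close> with \<open>y\<close> a small cycle of \<open>B\<close>, and \<open>y = \<phi>a - db\<close>
  with \<open>b\<close> so small that \<open>\<psi>b + c\<close> is small.
  For (b), quasi-openness of \<open>0 \<rightarrow> C/\<psi>B\<close> writes every small \<open>z \<in> C\<^sup>m\<close> with \<open>dz \<in> \<psi>B\<^sup>m\<^sup>+\<^sup>1\<close>
  as \<open>\<psi>b - dv\<close> with \<open>v\<close> small; since \<open>\<psi>\<close> is an embedding, \<open>b\<close> is small too, and injectivity of
  \<open>\<psi>\<close> carries the cocycle condition and the required identities back from \<open>C\<close> to \<open>B\<close>.\<close>

lemma is_complex_comm_group: "is_complex A \<Longrightarrow> comm_group (grp A n)"
  by (simp add: is_complex_def ab_top_group_def)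

lemma is_complex_ab_top_group: "is_complex A \<Longrightarrow> ab_top_group (grp A n) (top A n)"
  by (simp add: is_complex_def)

lemma is_complex_topspace: "is_complex A \<Longrightarrow> topspace (top A n) = carrier (grp A n)"
  by (simp add: is_complex_def ab_top_group_def)

lemma is_complex_one_closed: "is_complex A \<Longrightarrow> \<one>\<^bsub>grp A n\<^esub> \<in> carrier (grp A n)"
  using is_complex_comm_group[of A n] by (simp add: comm_group_def group.is_monoid monoid.one_closed)

lemma is_complex_dif_group_hom: "is_complex A \<Longrightarrow> group_hom (grp A n) (grp A (n + 1)) (dif A n)"
  using is_complex_comm_group[of A n] is_complex_comm_group[of A "n + 1"]
  by (simp add: is_complex_def group_hom_def group_hom_axioms_def comm_group.axioms(2))

lemma is_complex_dif_continuous: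
  "is_complex A \<Longrightarrow> continuous_map (top A n) (top A (n + 1)) (dif A n)"
  by (simp add: is_complex_def)

lemma is_complex_dif_dif:
  assumes "is_complex A" "x \<in> carrier (grp A (n - 1))"
  shows "dif A n (dif A (n - 1) x) = \<one>\<^bsub>grp A (n + 1)\<^esub>"
proof -
  have "dif A (n - 1 + 1) (dif A (n - 1) x) = \<one>\<^bsub>grp A (n - 1 + 2)\<^esub>"
    using assms unfolding is_complex_def by blast
  moreover have "n - 1 + 1 = n" "n - 1 + 2 = n + 1" by simp_all
  ultimately show ?thesis by (simp only:)
qed

lemma cplx_hom_group_hom:
  "is_complex A \<Longrightarrow> is_complex B \<Longrightarrow> cplx_hom A B f \<Longrightarrow> group_hom (grp A n) (grp B n) (f n)"
  by (simp add: group_hom_def group_hom_axioms_def is_complex_comm_group comm_group.axioms(2)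
      cplx_hom_def)

lemma cplx_hom_continuous: "cplx_hom A B f \<Longrightarrow> continuous_map (top A n) (top B n) (f n)"
  by (simp add: cplx_hom_def)

lemma cplx_hom_dif:
  "cplx_hom A B f \<Longrightarrow> x \<in> carrier (grp A n) \<Longrightarrow> f (n + 1) (dif A n x) = dif B n (f n x)"
  by (simp add: cplx_hom_def)

lemma cplx_hom_dif_pred:
  "cplx_hom A B f \<Longrightarrow> x \<in> carrier (grp A (n - 1)) \<Longrightarrow> f n (dif A (n - 1) x) = dif B (n - 1) (f (n - 1) x)"
  using cplx_hom_dif[of A B f x "n - 1"] by simp

lemma cplx_hom_comp:
  assumes "is_complex A" "is_complex B" "cplx_hom A B f" "cplx_hom B C g"
  shows "cplx_hom A C (cplx_comp g f)"
  unfolding cplx_hom_def cplx_comp_def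
proof (intro allI conjI ballI)
  fix n
  show "g n \<circ> f n \<in> hom (grp A n) (grp C n)"
    using assms(3,4) by (auto simp: cplx_hom_def intro: hom_compose)
  show "continuous_map (top A n) (top C n) (g n \<circ> f n)"
    using assms(3,4) by (auto simp: cplx_hom_def intro: continuous_map_compose)
  fix x assume "x \<in> carrier (grp A n)"
  then show "(g (n + 1) \<circ> f (n + 1)) (dif A n x) = dif C n ((g n \<circ> f n) x)"
    using cplx_hom_dif[OF assms(3)] cplx_hom_dif[OF assms(4)]
      group_hom.hom_closed[OF cplx_hom_group_hom[OF assms(1-3)]] by simp
qed

definition translations_continuous :: "('a, 'b) monoid_scheme \<Rightarrow> 'a topology \<Rightarrow> bool" where
  "translations_continuous G T \<longleftrightarrow> (\<forall>a \<in> carrier G. continuous_map T T (\<lambda>x. a \<otimes>\<^bsub>G\<^esub> x))"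

lemma ab_top_group_translations_continuous:
  assumes "ab_top_group G T"
  shows "translations_continuous G T"
  unfolding translations_continuous_def
proof
  fix a assume a: "a \<in> carrier G"
  have mult: "continuous_map (prod_topology T T) T (\<lambda>(x,y). x \<otimes>\<^bsub>G\<^esub> y)"
    and top: "topspace T = carrier G"
    using assms by (auto simp: ab_top_group_def)
  have "continuous_map T (prod_topology T T) (\<lambda>x. (a, x))"
    by (intro continuous_map_pairedI) (auto simp: top a)
  from continuous_map_compose[OF this mult] show "continuous_map T T (\<lambda>x. a \<otimes>\<^bsub>G\<^esub> x)"
    by (simp add: o_def)
qed

lemma translations_continuous_openin_preimage:
  assumes "translations_continuous G T" "a \<in> carrier G" "openin T U"
  shows "openin T {x \<in> topspace T. a \<otimes>\<^bsub>G\<^esub> x \<in> U}"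
proof -
  have "continuous_map T T (\<lambda>x. a \<otimes>\<^bsub>G\<^esub> x)"
    using assms(1,2) by (simp add: translations_continuous_def)
  from openin_continuous_map_preimage[OF this assms(3)] show ?thesis .
qed

lemma translations_continuous_subgroup:
  assumes "translations_continuous G T" "subgroup H G"
  shows "translations_continuous (G\<lparr>carrier := H\<rparr>) (subtopology T H)"
  using assms
  by (auto simp: translations_continuous_def continuous_map_in_subtopology
      intro: continuous_map_from_subtopology subgroup.m_closed dest: subgroup.subset)

lemma translations_continuous_DirProd:
  assumes "translations_continuous G S" "translations_continuous H T"
  shows "translations_continuous (G \<times>\<times> H) (prod_topology S T)"
  unfolding translations_continuous_def mult_DirProd'
proof
  fix p assume "p \<in> carrier (G \<times>\<times> H)"
  then have "continuous_map S S (\<lambda>x. fst p \<otimes>\<^bsub>G\<^esub> x)" "continuous_map T T (\<lambda>y. snd p \<otimes>\<^bsub>H\<^esub> y)"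
    using assms by (auto simp: translations_continuous_def)
  from continuous_map_compose[OF continuous_map_fst this(1)] continuous_map_compose[OF continuous_map_snd this(2)]
  show "continuous_map (prod_topology S T) (prod_topology S T)
      (\<lambda>x. (fst p \<otimes>\<^bsub>G\<^esub> fst x, snd p \<otimes>\<^bsub>H\<^esub> snd x))"
    unfolding o_def by (rule continuous_map_pairedI)
qed

lemma ab_top_group_mult_nhds_one:
  assumes "ab_top_group G T" "openin T W" "\<one>\<^bsub>G\<^esub> \<in> W"
  obtains V where "openin T V" "\<one>\<^bsub>G\<^esub> \<in> V" "\<And>x y. x \<in> V \<Longrightarrow> y \<in> V \<Longrightarrow> x \<otimes>\<^bsub>G\<^esub> y \<in> W"
proof -
  have mult: "continuous_map (prod_topology T T) T (\<lambda>(x,y). x \<otimes>\<^bsub>G\<^esub> y)"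
    and top: "topspace T = carrier G" and "comm_group G"
    using assms by (auto simp: ab_top_group_def)
  interpret comm_group G by fact
  let ?M = "{p \<in> topspace (prod_topology T T). (\<lambda>(x,y). x \<otimes>\<^bsub>G\<^esub> y) p \<in> W}"
  have "openin (prod_topology T T) ?M"
    using openin_continuous_map_preimage[OF mult assms(2)] .
  moreover have "(\<one>\<^bsub>G\<^esub>, \<one>\<^bsub>G\<^esub>) \<in> ?M"
    using assms(3) by (simp add: top)
  ultimately obtain V1 V2 where V: "openin T V1" "openin T V2" "\<one>\<^bsub>G\<^esub> \<in> V1" "\<one>\<^bsub>G\<^esub> \<in> V2"
    "V1 \<times> V2 \<subseteq> ?M"
    unfolding openin_prod_topology_alt by meson
  show thesis
  proof (rule that[of "V1 \<inter> V2"])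
    fix x y assume "x \<in> V1 \<inter> V2" "y \<in> V1 \<inter> V2"
    then have "(x, y) \<in> V1 \<times> V2" by simp
    with V(5) have "(x, y) \<in> ?M" by (rule subsetD)
    then show "x \<otimes>\<^bsub>G\<^esub> y \<in> W" by simp
  qed (simp_all add: V openin_Int)
qed

lemma open_map_group_hom_iff_nhds_one:
  assumes hom: "group_hom G H h"
    and top: "topspace S = carrier G" "topspace T = carrier H"
    and transl: "translations_continuous G S" "translations_continuous H T"
  shows "open_map S T h \<longleftrightarrow>
    (\<forall>U. openin S U \<and> \<one>\<^bsub>G\<^esub> \<in> U \<longrightarrow> (\<exists>N. openin T N \<and> \<one>\<^bsub>H\<^esub> \<in> N \<and> N \<subseteq> h ` U))"
proof
  interpret group_hom G H h by (rule hom)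
  assume "open_map S T h"
  then show "\<forall>U. openin S U \<and> \<one>\<^bsub>G\<^esub> \<in> U \<longrightarrow> (\<exists>N. openin T N \<and> \<one>\<^bsub>H\<^esub> \<in> N \<and> N \<subseteq> h ` U)"
    by (metis hom_one image_eqI open_map_def subset_refl)
next
  interpret group_hom G H h by (rule hom)
  assume nhds: "\<forall>U. openin S U \<and> \<one>\<^bsub>G\<^esub> \<in> U \<longrightarrow> (\<exists>N. openin T N \<and> \<one>\<^bsub>H\<^esub> \<in> N \<and> N \<subseteq> h ` U)"
  show "open_map S T h"
    unfolding open_map_def
  proof (intro allI impI)
    fix W assume W: "openin S W"
    show "openin T (h ` W)"
      unfolding openin_subopen[of T "h ` W"]
    proof
      fix y assume "y \<in> h ` W"
      then obtain w where w: "w \<in> W" "y = h w" by blast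
      have wG: "w \<in> carrier G" using openin_subset[OF W] w(1) top(1) by blast
      have yH: "y \<in> carrier H" using w(2) wG by simp
      let ?U = "{x \<in> topspace S. w \<otimes>\<^bsub>G\<^esub> x \<in> W}"
      have "openin S ?U" "\<one>\<^bsub>G\<^esub> \<in> ?U"
        using translations_continuous_openin_preimage[OF transl(1) wG W] wG w(1) top(1) by auto
      with nhds obtain N where N: "openin T N" "\<one>\<^bsub>H\<^esub> \<in> N" "N \<subseteq> h ` ?U" by blast
      let ?N = "{z \<in> topspace T. inv\<^bsub>H\<^esub> y \<otimes>\<^bsub>H\<^esub> z \<in> N}"
      have "?N \<subseteq> h ` W"
      proof
        fix z assume z: "z \<in> ?N"
        then obtain u where u: "u \<in> carrier G" "w \<otimes>\<^bsub>G\<^esub> u \<in> W" "inv\<^bsub>H\<^esub> y \<otimes>\<^bsub>H\<^esub> z = h u"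
          using N(3) top by blast
        have "z = h w \<otimes>\<^bsub>H\<^esub> h u"
          using H.inv_solve_left[OF _ yH, of "h u" z] u z w(2) top(2) by auto
        also have "\<dots> = h (w \<otimes>\<^bsub>G\<^esub> u)" using wG u(1) by simp
        finally show "z \<in> h ` W" using u(2) by blast
      qed
      moreover have "openin T ?N" "y \<in> ?N"
        using translations_continuous_openin_preimage[OF transl(2) H.inv_closed[OF yH] N(1)]
          yH N(2) top(2) by auto
      ultimately show "\<exists>N'. openin T N' \<and> y \<in> N' \<and> N' \<subseteq> h ` W" by blast
    qed
  qed
qed

abbreviation cycles_group :: "'a cplx \<Rightarrow> int \<Rightarrow> 'a monoid" where
  "cycles_group A n \<equiv> (grp A n)\<lparr>carrier := cycles A n\<rparr>"

lemma subgroup_cycles: "is_complex A \<Longrightarrow> subgroup (cycles A n) (grp A n)"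
  using group_hom.subgroup_kernel[OF is_complex_dif_group_hom]
  by (simp add: cycles_def kernel_def)

lemma dif_in_cycles:
  assumes "is_complex A" "b \<in> carrier (grp A (n - 1))"
  shows "dif A (n - 1) b \<in> cycles A n"
  using group_hom.hom_closed[OF is_complex_dif_group_hom[OF assms(1), of "n - 1"] assms(2)]
    is_complex_dif_dif[OF assms]
  by (simp add: cycles_def)

lemma cplx_hom_cycles:
  assumes "is_complex A" "is_complex B" "cplx_hom A B f" "a \<in> cycles A n"
  shows "f n a \<in> cycles B n"
proof -
  interpret group_hom "grp A (n + 1)" "grp B (n + 1)" "f (n + 1)"
    using cplx_hom_group_hom[OF assms(1-3)] .
  show ?thesis
    using assms(4) cplx_hom_dif[OF assms(3), of a n, symmetric]
      group_hom.hom_closed[OF cplx_hom_group_hom[OF assms(1-3)]]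
    by (auto simp: cycles_def)
qed

definition cycle_map :: "'b cplx \<Rightarrow> (int \<Rightarrow> 'a \<Rightarrow> 'b) \<Rightarrow> int \<Rightarrow> 'a \<times> 'b \<Rightarrow> 'b" where
  "cycle_map B f n = (\<lambda>(a, b). f n a \<otimes>\<^bsub>grp B n\<^esub> inv\<^bsub>grp B n\<^esub> dif B (n - 1) b)"

lemma quasi_open_iff_open_map_cycle_map:
  "quasi_open A B f \<longleftrightarrow> (\<forall>n. open_map (prod_topology (subtopology (top A n) (cycles A n)) (top B (n - 1)))
     (subtopology (top B n) (cycles B n)) (cycle_map B f n))"
  by (simp add: quasi_open_def cycle_map_def)

lemma cycle_map_group_hom:
  assumes "is_complex A" "is_complex B" "cplx_hom A B f"
  shows "group_hom (cycles_group A n \<times>\<times> grp B (n - 1)) (cycles_group B n) (cycle_map B f n)"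
proof -
  interpret B: comm_group "grp B n" using is_complex_comm_group[OF assms(2)] .
  interpret f: group_hom "grp A n" "grp B n" "f n" using cplx_hom_group_hom[OF assms] .
  interpret d: group_hom "grp B (n - 1)" "grp B n" "dif B (n - 1)"
    using is_complex_dif_group_hom[OF assms(2), of "n - 1"] by simp
  have ZA: "subgroup (cycles A n) (grp A n)" and ZB: "subgroup (cycles B n) (grp B n)"
    using subgroup_cycles assms(1,2) by blast+
  have "cycle_map B f n (a, b) \<in> cycles B n"
    if "a \<in> cycles A n" "b \<in> carrier (grp B (n - 1))" for a b
    using that cplx_hom_cycles[OF assms] dif_in_cycles[OF assms(2)] ZB
    by (simp add: cycle_map_def subgroup.m_closed subgroup.m_inv_closed)
  moreover have "cycle_map B f n (p \<otimes>\<^bsub>cycles_group A n \<times>\<times> grp B (n - 1)\<^esub> q)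
      = cycle_map B f n p \<otimes>\<^bsub>grp B n\<^esub> cycle_map B f n q"
    if "p \<in> cycles A n \<times> carrier (grp B (n - 1))" "q \<in> cycles A n \<times> carrier (grp B (n - 1))" for p q
    using that subsetD[OF subgroup.subset[OF ZA]]
    by (auto simp: cycle_map_def mult_DirProd' B.inv_mult B.m_ac f.hom_mult)
  ultimately show ?thesis
    using ZA ZB group.subgroup_imp_group[of "grp A n"] group.subgroup_imp_group[of "grp B n"]
      is_complex_comm_group[OF assms(1)] B.is_group d.G.is_group
    by (auto simp: group_hom_def group_hom_axioms_def hom_def comm_group.axioms(2) intro!: DirProd_group)
qed

definition quasi_open_nhds :: "'a cplx \<Rightarrow> 'b cplx \<Rightarrow> (int \<Rightarrow> 'a \<Rightarrow> 'b) \<Rightarrow> int \<Rightarrow> bool" where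
  "quasi_open_nhds A B f n \<longleftrightarrow> (\<forall>U V. openin (top A n) U \<longrightarrow> \<one>\<^bsub>grp A n\<^esub> \<in> U \<longrightarrow>
     openin (top B (n - 1)) V \<longrightarrow> \<one>\<^bsub>grp B (n - 1)\<^esub> \<in> V \<longrightarrow>
     (\<exists>N. openin (top B n) N \<and> \<one>\<^bsub>grp B n\<^esub> \<in> N \<and>
          N \<inter> cycles B n \<subseteq> cycle_map B f n ` ((U \<inter> cycles A n) \<times> V)))"

lemma nhds_prod_subtopology_iff_rectangles:
  assumes "a \<in> Z" "c \<in> Z'"
  shows "(\<forall>W. openin (prod_topology (subtopology X Z) Y) W \<and> (a, b) \<in> W \<longrightarrow>
            (\<exists>N. openin (subtopology X' Z') N \<and> c \<in> N \<and> N \<subseteq> F ` W))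
     \<longleftrightarrow> (\<forall>U V. openin X U \<longrightarrow> a \<in> U \<longrightarrow> openin Y V \<longrightarrow> b \<in> V \<longrightarrow>
            (\<exists>N. openin X' N \<and> c \<in> N \<and> N \<inter> Z' \<subseteq> F ` ((U \<inter> Z) \<times> V)))"
proof (intro iffI allI impI)
  fix U V assume nhds: "\<forall>W. openin (prod_topology (subtopology X Z) Y) W \<and> (a, b) \<in> W \<longrightarrow>
      (\<exists>N. openin (subtopology X' Z') N \<and> c \<in> N \<and> N \<subseteq> F ` W)"
    and U: "openin X U" "a \<in> U" and V: "openin Y V" "b \<in> V"
  have "openin (prod_topology (subtopology X Z) Y) ((U \<inter> Z) \<times> V)"
    using U(1) V(1) by (simp add: openin_prod_Times_iff openin_subtopology_Int)
  moreover have "(a, b) \<in> (U \<inter> Z) \<times> V" using U(2) V(2) assms(1) by simp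
  ultimately obtain N where N: "openin (subtopology X' Z') N" "c \<in> N" "N \<subseteq> F ` ((U \<inter> Z) \<times> V)"
    using nhds by blast
  then obtain N' where "openin X' N'" "N = N' \<inter> Z'"
    by (auto simp: openin_subtopology)
  with N show "\<exists>N. openin X' N \<and> c \<in> N \<and> N \<inter> Z' \<subseteq> F ` ((U \<inter> Z) \<times> V)"
    by blast
next
  fix W assume nhds: "\<forall>U V. openin X U \<longrightarrow> a \<in> U \<longrightarrow> openin Y V \<longrightarrow> b \<in> V \<longrightarrow>
      (\<exists>N. openin X' N \<and> c \<in> N \<and> N \<inter> Z' \<subseteq> F ` ((U \<inter> Z) \<times> V))"
    and W: "openin (prod_topology (subtopology X Z) Y) W \<and> (a, b) \<in> W"
  then obtain S V where S: "openin (subtopology X Z) S" "a \<in> S"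
    and V: "openin Y V" "b \<in> V" and "S \<times> V \<subseteq> W"
    unfolding openin_prod_topology_alt by meson
  moreover obtain U where U: "openin X U" "S = U \<inter> Z"
    using S(1) by (auto simp: openin_subtopology)
  moreover have "a \<in> U" using S(2) U(2) by blast
  ultimately obtain N where N: "openin X' N" "c \<in> N" "N \<inter> Z' \<subseteq> F ` (S \<times> V)"
    using nhds[rule_format, OF U(1) _ V] unfolding U(2) by blast
  from this(3) \<open>S \<times> V \<subseteq> W\<close> have "N \<inter> Z' \<subseteq> F ` W"
    by (meson image_mono order_trans)
  then show "\<exists>N. openin (subtopology X' Z') N \<and> c \<in> N \<and> N \<subseteq> F ` W"
    using N(1,2) assms(2) by (intro exI[of _ "N \<inter> Z'"]) (auto simp: openin_subtopology_Int)
qed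

lemma open_map_cycle_map_iff_quasi_open_nhds:
  assumes A: "is_complex A" and B: "is_complex B" and f: "cplx_hom A B f"
  shows "open_map (prod_topology (subtopology (top A n) (cycles A n)) (top B (n - 1)))
      (subtopology (top B n) (cycles B n)) (cycle_map B f n) \<longleftrightarrow> quasi_open_nhds A B f n"
    (is "open_map ?S ?T ?F \<longleftrightarrow> _")
proof -
  have ZA: "subgroup (cycles A n) (grp A n)" and ZB: "subgroup (cycles B n) (grp B n)"
    using subgroup_cycles A B by blast+
  have tA: "translations_continuous (grp A k) (top A k)"
    and tB: "translations_continuous (grp B k) (top B k)" for k
    using A B by (simp_all add: ab_top_group_translations_continuous is_complex_ab_top_group)
  have "topspace ?S = carrier (cycles_group A n \<times>\<times> grp B (n - 1))"
    "topspace ?T = carrier (cycles_group B n)"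
    using subgroup.subset[OF ZA] subgroup.subset[OF ZB]
    by (simp_all add: is_complex_topspace A B Int_absorb1)
  moreover have "translations_continuous (cycles_group A n \<times>\<times> grp B (n - 1)) ?S"
    "translations_continuous (cycles_group B n) ?T"
    using translations_continuous_DirProd[OF translations_continuous_subgroup[OF tA ZA] tB]
      translations_continuous_subgroup[OF tB ZB] .
  ultimately have "open_map ?S ?T ?F \<longleftrightarrow> (\<forall>W. openin ?S W \<and> (\<one>\<^bsub>grp A n\<^esub>, \<one>\<^bsub>grp B (n - 1)\<^esub>) \<in> W \<longrightarrow>
      (\<exists>N. openin ?T N \<and> \<one>\<^bsub>grp B n\<^esub> \<in> N \<and> N \<subseteq> ?F ` W))"
    using open_map_group_hom_iff_nhds_one[OF cycle_map_group_hom[OF A B f]] by simp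
  also have "\<dots> \<longleftrightarrow> quasi_open_nhds A B f n"
    unfolding quasi_open_nhds_def
    by (rule nhds_prod_subtopology_iff_rectangles) (simp_all add: subgroup.one_closed ZA ZB)
  finally show ?thesis .
qed

lemma quasi_open_iff_quasi_open_nhds:
  "is_complex A \<Longrightarrow> is_complex B \<Longrightarrow> cplx_hom A B f \<Longrightarrow> quasi_open A B f \<longleftrightarrow> (\<forall>n. quasi_open_nhds A B f n)"
  by (simp add: quasi_open_iff_open_map_cycle_map open_map_cycle_map_iff_quasi_open_nhds)

lemma cycle_map_cycle_map:
  assumes A: "is_complex A" and B: "is_complex B" and C: "is_complex C"
    and f: "cplx_hom A B f" and g: "cplx_hom B C g"
    and a: "a \<in> carrier (grp A n)" and b: "b \<in> carrier (grp B (n - 1))"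
    and c: "c \<in> carrier (grp C (n - 1))"
  shows "cycle_map C g n (cycle_map B f n (a, b), c)
    = cycle_map C (cplx_comp g f) n (a, g (n - 1) b \<otimes>\<^bsub>grp C (n - 1)\<^esub> c)"
proof -
  interpret C: comm_group "grp C n" using is_complex_comm_group[OF C] .
  interpret f: group_hom "grp A n" "grp B n" "f n" using cplx_hom_group_hom[OF A B f] .
  interpret g: group_hom "grp B n" "grp C n" "g n" using cplx_hom_group_hom[OF B C g] .
  interpret g': group_hom "grp B (n - 1)" "grp C (n - 1)" "g (n - 1)" using cplx_hom_group_hom[OF B C g] .
  interpret dB: group_hom "grp B (n - 1)" "grp B n" "dif B (n - 1)"
    using is_complex_dif_group_hom[OF B, of "n - 1"] by simp
  interpret dC: group_hom "grp C (n - 1)" "grp C n" "dif C (n - 1)"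
    using is_complex_dif_group_hom[OF C, of "n - 1"] by simp
  show ?thesis
    using a b c cplx_hom_dif_pred[OF g b]
    by (simp add: cycle_map_def cplx_comp_def C.inv_mult C.m_ac)
qed

lemma dif_cycle_map:
  assumes B: "is_complex B" and C: "is_complex C" and g: "cplx_hom B C g"
    and b: "b \<in> carrier (grp B n)" and v: "v \<in> carrier (grp C (n - 1))"
  shows "dif C n (cycle_map C g n (b, v)) = g (n + 1) (dif B n b)"
proof -
  interpret C: comm_group "grp C n" using is_complex_comm_group[OF C] .
  interpret g: group_hom "grp B n" "grp C n" "g n" using cplx_hom_group_hom[OF B C g] .
  interpret dC: group_hom "grp C n" "grp C (n + 1)" "dif C n" using is_complex_dif_group_hom[OF C] .
  interpret dC': group_hom "grp C (n - 1)" "grp C n" "dif C (n - 1)"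
    using is_complex_dif_group_hom[OF C, of "n - 1"] by simp
  show ?thesis
    using b v is_complex_dif_dif[OF C v] cplx_hom_dif[OF g b] by (simp add: cycle_map_def)
qed

lemma quasi_open_nhds_comp:
  assumes A: "is_complex A" and B: "is_complex B" and C: "is_complex C"
    and f: "cplx_hom A B f" and g: "cplx_hom B C g"
    and qf: "quasi_open_nhds A B f n" and qg: "quasi_open_nhds B C g n"
  shows "quasi_open_nhds A C (cplx_comp g f) n"
  unfolding quasi_open_nhds_def
proof (intro allI impI)
  fix U V assume U: "openin (top A n) U" "\<one>\<^bsub>grp A n\<^esub> \<in> U"
    and V: "openin (top C (n - 1)) V" "\<one>\<^bsub>grp C (n - 1)\<^esub> \<in> V"
  interpret g: group_hom "grp B (n - 1)" "grp C (n - 1)" "g (n - 1)" using cplx_hom_group_hom[OF B C g] .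
  obtain V' where V': "openin (top C (n - 1)) V'" "\<one>\<^bsub>grp C (n - 1)\<^esub> \<in> V'"
    "\<And>x y. x \<in> V' \<Longrightarrow> y \<in> V' \<Longrightarrow> x \<otimes>\<^bsub>grp C (n - 1)\<^esub> y \<in> V"
    using ab_top_group_mult_nhds_one[OF is_complex_ab_top_group[OF C] V] by blast
  define W where "W = {b \<in> carrier (grp B (n - 1)). g (n - 1) b \<in> V'}"
  have "openin (top B (n - 1)) W" "\<one>\<^bsub>grp B (n - 1)\<^esub> \<in> W"
    using openin_continuous_map_preimage[OF cplx_hom_continuous[OF g] V'(1)] V'(2)
    by (simp_all add: W_def is_complex_topspace[OF B])
  then obtain NB where NB: "openin (top B n) NB" "\<one>\<^bsub>grp B n\<^esub> \<in> NB"
    "NB \<inter> cycles B n \<subseteq> cycle_map B f n ` ((U \<inter> cycles A n) \<times> W)"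
    using qf U unfolding quasi_open_nhds_def by blast
  obtain NC where NC: "openin (top C n) NC" "\<one>\<^bsub>grp C n\<^esub> \<in> NC"
    "NC \<inter> cycles C n \<subseteq> cycle_map C g n ` ((NB \<inter> cycles B n) \<times> V')"
    using qg NB(1,2) V'(1,2) unfolding quasi_open_nhds_def by blast
  have "NC \<inter> cycles C n \<subseteq> cycle_map C (cplx_comp g f) n ` ((U \<inter> cycles A n) \<times> V)"
  proof
    fix z assume "z \<in> NC \<inter> cycles C n"
    then obtain y c where y: "y \<in> NB \<inter> cycles B n" and c: "c \<in> V'" and z: "z = cycle_map C g n (y, c)"
      using NC(3) by auto
    then obtain a b where a: "a \<in> U \<inter> cycles A n" and b: "b \<in> W" and "y = cycle_map B f n (a, b)"
      using NB(3) by auto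
    moreover have "a \<in> carrier (grp A n)" "b \<in> carrier (grp B (n - 1))" "c \<in> carrier (grp C (n - 1))"
      using a b c openin_subset[OF V'(1)] is_complex_topspace[OF C] by (auto simp: W_def cycles_def)
    ultimately have "z = cycle_map C (cplx_comp g f) n (a, g (n - 1) b \<otimes>\<^bsub>grp C (n - 1)\<^esub> c)"
      using z cycle_map_cycle_map[OF A B C f g] by simp
    moreover have "g (n - 1) b \<otimes>\<^bsub>grp C (n - 1)\<^esub> c \<in> V"
      using V'(3) b c by (simp add: W_def)
    ultimately show "z \<in> cycle_map C (cplx_comp g f) n ` ((U \<inter> cycles A n) \<times> V)"
      using a by blast
  qed
  with NC(1,2) show "\<exists>N. openin (top C n) N \<and> \<one>\<^bsub>grp C n\<^esub> \<in> N \<and>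
      N \<inter> cycles C n \<subseteq> cycle_map C (cplx_comp g f) n ` ((U \<inter> cycles A n) \<times> V)"
    by blast
qed

lemma quasi_open_comp:
  assumes "is_complex A" "is_complex B" "is_complex C" "cplx_hom A B f" "cplx_hom B C g"
    and "quasi_open A B f" "quasi_open B C g"
  shows "quasi_open A C (cplx_comp g f)"
  using assms quasi_open_nhds_comp[OF assms(1-5)]
  by (simp add: quasi_open_iff_quasi_open_nhds cplx_hom_comp)

lemma openin_quot_topology:
  "openin (quot_topology X f) U \<longleftrightarrow> U \<subseteq> f ` topspace X \<and> openin X {x \<in> topspace X. f x \<in> U}"
proof -
  have "istopology (\<lambda>U. U \<subseteq> f ` topspace X \<and> openin X {x \<in> topspace X. f x \<in> U})"
    unfolding istopology_def
  proof (rule conjI; intro allI impI)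
    fix S T assume "S \<subseteq> f ` topspace X \<and> openin X {x \<in> topspace X. f x \<in> S}"
      and "T \<subseteq> f ` topspace X \<and> openin X {x \<in> topspace X. f x \<in> T}"
    moreover have "{x \<in> topspace X. f x \<in> S \<inter> T} = {x \<in> topspace X. f x \<in> S} \<inter> {x \<in> topspace X. f x \<in> T}"
      by blast
    ultimately show "S \<inter> T \<subseteq> f ` topspace X \<and> openin X {x \<in> topspace X. f x \<in> S \<inter> T}"
      by auto
  next
    fix K assume K: "\<forall>S\<in>K. S \<subseteq> f ` topspace X \<and> openin X {x \<in> topspace X. f x \<in> S}"
    then have "openin X (\<Union>S\<in>K. {x \<in> topspace X. f x \<in> S})" by blast
    moreover have "(\<Union>S\<in>K. {x \<in> topspace X. f x \<in> S}) = {x \<in> topspace X. f x \<in> \<Union>K}" by blast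
    ultimately show "\<Union>K \<subseteq> f ` topspace X \<and> openin X {x \<in> topspace X. f x \<in> \<Union>K}"
      using K by auto
  qed
  then show ?thesis by (simp add: quot_topology_def)
qed

lemma (in group) open_map_quot_topology_rcos:
  assumes "topspace T = carrier G" "translations_continuous G T" "subgroup H G"
  shows "open_map T (quot_topology T (\<lambda>x. H #> x)) (\<lambda>x. H #> x)"
  unfolding open_map_def openin_quot_topology
proof (intro allI impI conjI)
  fix V assume V: "openin T V"
  then show "(\<lambda>x. H #> x) ` V \<subseteq> (\<lambda>x. H #> x) ` topspace T"
    using openin_subset by blast
  have VG: "V \<subseteq> carrier G" using openin_subset[OF V] assms(1) by simp
  have HG: "\<And>k. k \<in> H \<Longrightarrow> k \<in> carrier G" using subgroup.subset[OF assms(3)] by blast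
  have "{x \<in> topspace T. H #> x \<in> (\<lambda>x. H #> x) ` V}
      = (\<Union>k\<in>H. {x \<in> topspace T. inv k \<otimes> x \<in> V})"
  proof (intro equalityI subsetI)
    fix x assume "x \<in> {x \<in> topspace T. H #> x \<in> (\<lambda>x. H #> x) ` V}"
    then obtain v where x: "x \<in> carrier G" "v \<in> V" "H #> x = H #> v"
      using assms(1) by auto
    then have "x \<in> H #> v" using rcos_self[OF x(1) assms(3)] by simp
    then obtain k where "k \<in> H" "x = k \<otimes> v" by (auto simp: r_coset_def)
    moreover have "inv k \<otimes> (k \<otimes> v) = v"
      using HG[OF \<open>k \<in> H\<close>] VG x(2) by (auto simp: m_assoc[symmetric])
    ultimately show "x \<in> (\<Union>k\<in>H. {x \<in> topspace T. inv k \<otimes> x \<in> V})"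
      using x(1,2) assms(1) by force
  next
    fix x assume "x \<in> (\<Union>k\<in>H. {x \<in> topspace T. inv k \<otimes> x \<in> V})"
    then obtain k where k: "k \<in> H" "x \<in> carrier G" "inv k \<otimes> x \<in> V"
      using assms(1) by auto
    then have "x = k \<otimes> (inv k \<otimes> x)" using HG by (simp add: m_assoc[symmetric])
    then have "x \<in> H #> (inv k \<otimes> x)" using k(1) by (auto simp: r_coset_def)
    then have "H #> x = H #> (inv k \<otimes> x)"
      using repr_independence[OF _ _ assms(3)] k HG by (metis inv_closed m_closed)
    then show "x \<in> {x \<in> topspace T. H #> x \<in> (\<lambda>x. H #> x) ` V}"
      using k assms(1) by auto
  qed
  moreover have "openin T {x \<in> topspace T. inv k \<otimes> x \<in> V}" if "k \<in> H" for k
    using translations_continuous_openin_preimage[OF assms(2) inv_closed[OF HG[OF that]] V] .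
  ultimately show "openin T {x \<in> topspace T. H #> x \<in> (\<lambda>x. H #> x) ` V}"
    by auto
qed

lemma grp_quot_cplx: "grp (quot_cplx C B g) n = grp C n Mod (g n ` carrier (grp B n))"
  by (simp add: quot_cplx_def)

lemma top_quot_cplx:
  "top (quot_cplx C B g) n = quot_topology (top C n) (\<lambda>x. g n ` carrier (grp B n) #>\<^bsub>grp C n\<^esub> x)"
  by (simp add: quot_cplx_def)

lemma subgroup_image_cplx_hom:
  "is_complex B \<Longrightarrow> is_complex C \<Longrightarrow> cplx_hom B C g \<Longrightarrow> subgroup (g n ` carrier (grp B n)) (grp C n)"
  using group_hom.img_is_subgroup[OF cplx_hom_group_hom] .

lemma dif_quot_cplx_rcos:
  assumes B: "is_complex B" and C: "is_complex C" and g: "cplx_hom B C g"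
    and v: "v \<in> carrier (grp C n)"
  shows "dif (quot_cplx C B g) n (g n ` carrier (grp B n) #>\<^bsub>grp C n\<^esub> v)
       = g (n + 1) ` carrier (grp B (n + 1)) #>\<^bsub>grp C (n + 1)\<^esub> dif C n v"
proof -
  let ?H = "g n ` carrier (grp B n)" and ?H' = "g (n + 1) ` carrier (grp B (n + 1))"
  interpret C: comm_group "grp C n" using is_complex_comm_group[OF C] .
  interpret C': comm_group "grp C (n + 1)" using is_complex_comm_group[OF C] .
  interpret dC: group_hom "grp C n" "grp C (n + 1)" "dif C n" using is_complex_dif_group_hom[OF C] .
  interpret dB: group_hom "grp B n" "grp B (n + 1)" "dif B n" using is_complex_dif_group_hom[OF B] .
  interpret g: group_hom "grp B n" "grp C n" "g n" using cplx_hom_group_hom[OF B C g] .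
  define x where "x = (SOME x. x \<in> ?H #>\<^bsub>grp C n\<^esub> v)"
  have "x \<in> ?H #>\<^bsub>grp C n\<^esub> v"
    unfolding x_def using C.rcos_self[OF v subgroup_image_cplx_hom[OF B C g]] by (rule someI)
  then obtain b where b: "b \<in> carrier (grp B n)" "x = g n b \<otimes>\<^bsub>grp C n\<^esub> v"
    by (auto simp: r_coset_def)
  then have "dif C n x = g (n + 1) (dif B n b) \<otimes>\<^bsub>grp C (n + 1)\<^esub> dif C n v"
    using v cplx_hom_dif[OF g b(1)] by simp
  then have "dif C n x \<in> ?H' #>\<^bsub>grp C (n + 1)\<^esub> dif C n v"
    using b(1) by (auto simp: r_coset_def)
  then have "?H' #>\<^bsub>grp C (n + 1)\<^esub> dif C n v = ?H' #>\<^bsub>grp C (n + 1)\<^esub> dif C n x"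
    using C'.repr_independence[OF _ dC.hom_closed[OF v] subgroup_image_cplx_hom[OF B C g]] by blast
  then show ?thesis by (simp add: quot_cplx_def x_def)
qed

lemma cycle_map_zero_hom_quot_cplx:
  assumes B: "is_complex B" and C: "is_complex C" and g: "cplx_hom B C g"
    and v: "v \<in> carrier (grp C (m - 1))"
  shows "cycle_map (quot_cplx C B g) (zero_hom (quot_cplx C B g)) m
      ((), g (m - 1) ` carrier (grp B (m - 1)) #>\<^bsub>grp C (m - 1)\<^esub> v)
    = g m ` carrier (grp B m) #>\<^bsub>grp C m\<^esub> inv\<^bsub>grp C m\<^esub> dif C (m - 1) v"
proof -
  let ?H = "g m ` carrier (grp B m)"
  interpret C: comm_group "grp C m" using is_complex_comm_group[OF C] .
  interpret H: normal ?H "grp C m"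
    using C.subgroup_imp_normal[OF subgroup_image_cplx_hom[OF B C g]] .
  have dv: "dif C (m - 1) v \<in> carrier (grp C m)"
    using group_hom.hom_closed[OF is_complex_dif_group_hom[OF C, of "m - 1"] v] by simp
  have "inv\<^bsub>grp C m Mod ?H\<^esub> (?H #>\<^bsub>grp C m\<^esub> dif C (m - 1) v) = ?H #>\<^bsub>grp C m\<^esub> inv\<^bsub>grp C m\<^esub> dif C (m - 1) v"
    using H.inv_FactGroup H.rcos_inv[OF dv] dv by (simp add: carrier_FactGroup)
  moreover have "\<one>\<^bsub>grp C m Mod ?H\<^esub> \<otimes>\<^bsub>grp C m Mod ?H\<^esub> (?H #>\<^bsub>grp C m\<^esub> inv\<^bsub>grp C m\<^esub> dif C (m - 1) v)
      = ?H #>\<^bsub>grp C m\<^esub> inv\<^bsub>grp C m\<^esub> dif C (m - 1) v"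
    using monoid.l_one[OF group.is_monoid[OF H.factorgroup_is_group]] dv by (simp add: carrier_FactGroup)
  ultimately show ?thesis
    using dif_quot_cplx_rcos[OF B C g v]
    by (simp add: cycle_map_def zero_hom_def grp_quot_cplx del: one_FactGroup)
qed

lemma quasi_open_zero_quot_cplx_openin_image:
  assumes B: "is_complex B" and C: "is_complex C" and g: "cplx_hom B C g"
    and qz: "quasi_open zero_cplx (quot_cplx C B g) (zero_hom (quot_cplx C B g))"
    and V: "openin (top C (m - 1)) V"
  shows "openin (subtopology (top (quot_cplx C B g) m) (cycles (quot_cplx C B g) m))
    ((\<lambda>v. g m ` carrier (grp B m) #>\<^bsub>grp C m\<^esub> inv\<^bsub>grp C m\<^esub> dif C (m - 1) v) ` V)"
proof -
  let ?Q = "quot_cplx C B g" and ?H = "\<lambda>k. g k ` carrier (grp B k)"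
  let ?q = "\<lambda>k x. ?H k #>\<^bsub>grp C k\<^esub> x"
  interpret C': comm_group "grp C (m - 1)" using is_complex_comm_group[OF C] .
  have VC: "V \<subseteq> carrier (grp C (m - 1))" using openin_subset[OF V] is_complex_topspace[OF C] by blast
  have "openin (top ?Q (m - 1)) (?q (m - 1) ` V)"
    using C'.open_map_quot_topology_rcos[OF is_complex_topspace[OF C]
        ab_top_group_translations_continuous[OF is_complex_ab_top_group[OF C]]
        subgroup_image_cplx_hom[OF B C g]] V
    by (simp add: open_map_def top_quot_cplx)
  moreover have "openin (subtopology (top zero_cplx m) (cycles zero_cplx m)) {()}"
    by (simp add: zero_cplx_def cycles_def)
  ultimately have "openin (subtopology (top ?Q m) (cycles ?Q m))
      (cycle_map ?Q (zero_hom ?Q) m ` ({()} \<times> ?q (m - 1) ` V))"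
    using qz unfolding quasi_open_iff_open_map_cycle_map open_map_def by (simp add: openin_prod_Times_iff)
  moreover have "cycle_map ?Q (zero_hom ?Q) m ` ({()} \<times> ?q (m - 1) ` V)
      = (\<lambda>v. cycle_map ?Q (zero_hom ?Q) m ((), ?q (m - 1) v)) ` V"
    by blast
  also have "\<dots> = (\<lambda>v. ?q m (inv\<^bsub>grp C m\<^esub> dif C (m - 1) v)) ` V"
    by (rule image_cong[OF refl]) (rule cycle_map_zero_hom_quot_cplx[OF B C g subsetD[OF VC]])
  ultimately show ?thesis by simp
qed

text \<open>Quasi-openness of \<open>0\<^sup>\<bullet> \<rightarrow> C\<^sup>\<bullet>/\<psi>B\<^sup>\<bullet>\<close> in degree \<open>m\<close> says that \<open>-d\<close> maps small cochains of the
  quotient onto a neighbourhood of zero in its cocycles; the coset of a small \<open>z\<close> with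
  \<open>dz \<in> \<psi>B\<^sup>m\<^sup>+\<^sup>1\<close> is such a cocycle.\<close>
lemma quasi_open_zero_quot_cplx_lift:
  assumes B: "is_complex B" and C: "is_complex C" and g: "cplx_hom B C g"
    and qz: "quasi_open zero_cplx (quot_cplx C B g) (zero_hom (quot_cplx C B g))"
    and V: "openin (top C (m - 1)) V" "\<one>\<^bsub>grp C (m - 1)\<^esub> \<in> V"
  obtains P where "openin (top C m) P" "\<one>\<^bsub>grp C m\<^esub> \<in> P"
    "\<And>z. z \<in> P \<Longrightarrow> dif C m z \<in> g (m + 1) ` carrier (grp B (m + 1)) \<Longrightarrow>
       z \<in> cycle_map C g m ` (carrier (grp B m) \<times> V)"
proof -
  let ?Q = "quot_cplx C B g" and ?H = "\<lambda>k. g k ` carrier (grp B k)"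
  let ?q = "\<lambda>k x. ?H k #>\<^bsub>grp C k\<^esub> x"
  interpret C: comm_group "grp C m" using is_complex_comm_group[OF C] .
  interpret C'': comm_group "grp C (m + 1)" using is_complex_comm_group[OF C] .
  have sub: "subgroup (?H k) (grp C k)" for k using subgroup_image_cplx_hom[OF B C g] .
  obtain N where N: "openin (top ?Q m) N"
    "(\<lambda>v. ?q m (inv\<^bsub>grp C m\<^esub> dif C (m - 1) v)) ` V = N \<inter> cycles ?Q m"
    using quasi_open_zero_quot_cplx_openin_image[OF B C g qz V(1)] unfolding openin_subtopology by blast
  define P where "P = {x \<in> carrier (grp C m). ?q m x \<in> N}"
  show thesis
  proof (rule that[of P])
    show "openin (top C m) P"
      using N(1) by (simp add: P_def top_quot_cplx openin_quot_topology is_complex_topspace[OF C])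
    have "?q m (inv\<^bsub>grp C m\<^esub> dif C (m - 1) \<one>\<^bsub>grp C (m - 1)\<^esub>) = ?q m \<one>\<^bsub>grp C m\<^esub>"
      using group_hom.hom_one[OF is_complex_dif_group_hom[OF C, of "m - 1"]] by simp
    then show "\<one>\<^bsub>grp C m\<^esub> \<in> P"
      using N(2) V(2) by (auto simp: P_def)
  next
    fix z assume z: "z \<in> P" "dif C m z \<in> ?H (m + 1)"
    have zC: "z \<in> carrier (grp C m)" using z(1) by (simp add: P_def)
    have "dif ?Q m (?q m z) = ?H (m + 1)"
      using dif_quot_cplx_rcos[OF B C g zC] C''.coset_join2[OF _ sub z(2)]
        group_hom.hom_closed[OF is_complex_dif_group_hom[OF C] zC] by simp
    then have "?q m z \<in> cycles ?Q m"
      using zC by (simp add: cycles_def grp_quot_cplx carrier_FactGroup)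
    then obtain v where v: "v \<in> V" "?q m z = ?q m (inv\<^bsub>grp C m\<^esub> dif C (m - 1) v)"
      using N(2) z(1) by (auto simp: P_def)
    then have "z \<in> ?q m (inv\<^bsub>grp C m\<^esub> dif C (m - 1) v)"
      using C.rcos_self[OF zC sub] by simp
    then show "z \<in> cycle_map C g m ` (carrier (grp B m) \<times> V)"
      using v(1) by (auto simp: r_coset_def cycle_map_def)
  qed
qed

lemma embedding_map_openin_eq_preimage:
  assumes "embedding_map X Y f" "openin X U"
  obtains N where "openin Y N" "U = {x \<in> topspace X. f x \<in> N}"
proof -
  have hom: "homeomorphic_map X (subtopology Y (f ` topspace X)) f"
    using assms(1) by (simp add: embedding_map_def)
  then have "openin (subtopology Y (f ` topspace X)) (f ` U)"
    using homeomorphic_imp_open_map assms(2) by (auto simp: open_map_def)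
  then obtain N where N: "openin Y N" "f ` U = N \<inter> f ` topspace X"
    by (auto simp: openin_subtopology)
  have "U = {x \<in> topspace X. f x \<in> N}"
    using N(2) openin_subset[OF assms(2)] homeomorphic_imp_injective_map[OF hom]
    by (auto simp: inj_on_def)
  with N(1) show thesis by (rule that)
qed

lemma quasi_open_zero_quot_cplx_lift_embedding:
  assumes B: "is_complex B" and C: "is_complex C" and g: "cplx_hom B C g"
    and emb: "embedding_map (top B m) (top C m) (g m)"
    and qz: "quasi_open zero_cplx (quot_cplx C B g) (zero_hom (quot_cplx C B g))"
    and U: "openin (top B m) U" "\<one>\<^bsub>grp B m\<^esub> \<in> U"
    and V: "openin (top C (m - 1)) V" "\<one>\<^bsub>grp C (m - 1)\<^esub> \<in> V"
  obtains P where "openin (top C m) P" "\<one>\<^bsub>grp C m\<^esub> \<in> P"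
    "\<And>z. z \<in> P \<Longrightarrow> dif C m z \<in> g (m + 1) ` carrier (grp B (m + 1)) \<Longrightarrow>
       z \<in> cycle_map C g m ` (U \<times> V)"
proof -
  interpret C: comm_group "grp C m" using is_complex_comm_group[OF C] .
  interpret g: group_hom "grp B m" "grp C m" "g m" using cplx_hom_group_hom[OF B C g] .
  interpret d: group_hom "grp C (m - 1)" "grp C m" "dif C (m - 1)"
    using is_complex_dif_group_hom[OF C, of "m - 1"] by simp
  obtain N where N: "openin (top C m) N" "U = {b \<in> carrier (grp B m). g m b \<in> N}"
    using embedding_map_openin_eq_preimage[OF emb U(1)] is_complex_topspace[OF B] by metis
  then obtain N' where N': "openin (top C m) N'" "\<one>\<^bsub>grp C m\<^esub> \<in> N'"
    "\<And>x y. x \<in> N' \<Longrightarrow> y \<in> N' \<Longrightarrow> x \<otimes>\<^bsub>grp C m\<^esub> y \<in> N"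
    using ab_top_group_mult_nhds_one[OF is_complex_ab_top_group[OF C] N(1)] U(2) by auto
  let ?V = "{v \<in> carrier (grp C (m - 1)). dif C (m - 1) v \<in> N'} \<inter> V"
  have "openin (top C (m - 1)) ?V"
    using openin_continuous_map_preimage[OF is_complex_dif_continuous[OF C, of "m - 1", simplified] N'(1)] V(1)
    by (auto simp: is_complex_topspace[OF C])
  moreover have "\<one>\<^bsub>grp C (m - 1)\<^esub> \<in> ?V" using N'(2) V(2) by simp
  ultimately obtain P where P: "openin (top C m) P" "\<one>\<^bsub>grp C m\<^esub> \<in> P"
    "\<And>z. z \<in> P \<Longrightarrow> dif C m z \<in> g (m + 1) ` carrier (grp B (m + 1)) \<Longrightarrow>
       z \<in> cycle_map C g m ` (carrier (grp B m) \<times> ?V)"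
    using quasi_open_zero_quot_cplx_lift[OF B C g qz] by blast
  show thesis
  proof (rule that[of "P \<inter> N'"])
    fix z assume z: "z \<in> P \<inter> N'" "dif C m z \<in> g (m + 1) ` carrier (grp B (m + 1))"
    then have "z \<in> cycle_map C g m ` (carrier (grp B m) \<times> ?V)" using P(3) by blast
    then obtain b v where b: "b \<in> carrier (grp B m)" and v: "v \<in> ?V"
      and zbv: "z = g m b \<otimes>\<^bsub>grp C m\<^esub> inv\<^bsub>grp C m\<^esub> dif C (m - 1) v"
      by (auto simp: cycle_map_def)
    have "g m b = z \<otimes>\<^bsub>grp C m\<^esub> dif C (m - 1) v"
      using zbv b v C.inv_solve_right[of z "g m b" "dif C (m - 1) v"] z(1) P(1)
        openin_subset is_complex_topspace[OF C] by auto
    then have "b \<in> U" using N(2) N'(3) b v z(1) by auto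
    with v zbv show "z \<in> cycle_map C g m ` (U \<times> V)"
      by (auto simp: cycle_map_def)
  qed (use P(1,2) N'(1,2) in auto)
qed

lemma quasi_open_nhds_embedding:
  assumes B: "is_complex B" and C: "is_complex C" and g: "cplx_hom B C g"
    and emb: "embedding_map (top B n) (top C n) (g n)"
    and inj: "inj_on (g (n + 1)) (carrier (grp B (n + 1)))"
    and qz: "quasi_open zero_cplx (quot_cplx C B g) (zero_hom (quot_cplx C B g))"
  shows "quasi_open_nhds B C g n"
  unfolding quasi_open_nhds_def
proof (intro allI impI)
  fix U V assume U: "openin (top B n) U" "\<one>\<^bsub>grp B n\<^esub> \<in> U"
    and V: "openin (top C (n - 1)) V" "\<one>\<^bsub>grp C (n - 1)\<^esub> \<in> V"
  interpret g: group_hom "grp B (n + 1)" "grp C (n + 1)" "g (n + 1)" using cplx_hom_group_hom[OF B C g] .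
  interpret dB: group_hom "grp B n" "grp B (n + 1)" "dif B n" using is_complex_dif_group_hom[OF B] .
  obtain P where P: "openin (top C n) P" "\<one>\<^bsub>grp C n\<^esub> \<in> P"
    "\<And>z. z \<in> P \<Longrightarrow> dif C n z \<in> g (n + 1) ` carrier (grp B (n + 1)) \<Longrightarrow>
       z \<in> cycle_map C g n ` (U \<times> V)"
    using quasi_open_zero_quot_cplx_lift_embedding[OF B C g emb qz U V] by blast
  have "P \<inter> cycles C n \<subseteq> cycle_map C g n ` ((U \<inter> cycles B n) \<times> V)"
  proof
    fix z assume z: "z \<in> P \<inter> cycles C n"
    then have "dif C n z = g (n + 1) \<one>\<^bsub>grp B (n + 1)\<^esub>" by (simp add: cycles_def)
    then have "dif C n z \<in> g (n + 1) ` carrier (grp B (n + 1))"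
      by (rule image_eqI[OF _ g.G.one_closed])
    with z have "z \<in> cycle_map C g n ` (U \<times> V)" using P(3) by blast
    then obtain b v where b: "b \<in> U" and v: "v \<in> V" and zbv: "z = cycle_map C g n (b, v)"
      by auto
    have bB: "b \<in> carrier (grp B n)"
      using b openin_subset[OF U(1)] is_complex_topspace[OF B] by blast
    have vC: "v \<in> carrier (grp C (n - 1))"
      using v openin_subset[OF V(1)] is_complex_topspace[OF C] by blast
    have "g (n + 1) (dif B n b) = g (n + 1) \<one>\<^bsub>grp B (n + 1)\<^esub>"
      using dif_cycle_map[OF B C g bB vC] zbv z by (simp add: cycles_def)
    then have "dif B n b = \<one>\<^bsub>grp B (n + 1)\<^esub>"
      using inj bB by (simp add: inj_on_def)
    then show "z \<in> cycle_map C g n ` ((U \<inter> cycles B n) \<times> V)"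
      using b bB v zbv by (auto simp: cycles_def)
  qed
  with P(1,2) show "\<exists>N. openin (top C n) N \<and> \<one>\<^bsub>grp C n\<^esub> \<in> N \<and>
      N \<inter> cycles C n \<subseteq> cycle_map C g n ` ((U \<inter> cycles B n) \<times> V)"
    by blast
qed

lemma cycle_map_comp_preimage_subset:
  assumes A: "is_complex A" and B: "is_complex B" and C: "is_complex C"
    and f: "cplx_hom A B f" and g: "cplx_hom B C g"
    and inj: "inj_on (g n) (carrier (grp B n))"
    and S: "S \<subseteq> carrier (grp A n)" and V: "V \<subseteq> carrier (grp B (n - 1))"
    and P: "P \<subseteq> carrier (grp C (n - 1))"
    and lift: "\<And>c. c \<in> P \<Longrightarrow> dif C (n - 1) c \<in> g n ` carrier (grp B n) \<Longrightarrow>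
       c \<in> cycle_map C g (n - 1) ` (V \<times> carrier (grp C (n - 1 - 1)))"
  shows "{y \<in> carrier (grp B n). g n y \<in> cycle_map C (cplx_comp g f) n ` (S \<times> P)}
    \<subseteq> cycle_map B f n ` (S \<times> V)"
proof
  interpret C: comm_group "grp C n" using is_complex_comm_group[OF C] .
  interpret f: group_hom "grp A n" "grp B n" "f n" using cplx_hom_group_hom[OF A B f] .
  interpret g: group_hom "grp B n" "grp C n" "g n" using cplx_hom_group_hom[OF B C g] .
  interpret dB: group_hom "grp B (n - 1)" "grp B n" "dif B (n - 1)"
    using is_complex_dif_group_hom[OF B, of "n - 1"] by simp
  interpret dC: group_hom "grp C (n - 1)" "grp C n" "dif C (n - 1)"
    using is_complex_dif_group_hom[OF C, of "n - 1"] by simp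
  fix y assume "y \<in> {y \<in> carrier (grp B n). g n y \<in> cycle_map C (cplx_comp g f) n ` (S \<times> P)}"
  then obtain a c where yB: "y \<in> carrier (grp B n)" and a: "a \<in> S" and c: "c \<in> P"
    and gy: "g n y = g n (f n a) \<otimes>\<^bsub>grp C n\<^esub> inv\<^bsub>grp C n\<^esub> dif C (n - 1) c"
    by (auto simp: cycle_map_def cplx_comp_def)
  have aA: "a \<in> carrier (grp A n)" and cC: "c \<in> carrier (grp C (n - 1))" using a c S P by blast+
  have "dif C (n - 1) c = g n (inv\<^bsub>grp B n\<^esub> y \<otimes>\<^bsub>grp B n\<^esub> f n a)"
    using gy aA cC yB C.inv_solve_right C.inv_solve_left by simp
  then have "dif C (n - 1) c \<in> g n ` carrier (grp B n)"
    by (rule image_eqI) (simp add: aA yB)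
  then obtain b w where b: "b \<in> V" and w: "w \<in> carrier (grp C (n - 1 - 1))"
    and cbw: "c = cycle_map C g (n - 1) (b, w)"
    using lift[OF c] by auto
  have bB: "b \<in> carrier (grp B (n - 1))" using b V by blast
  have "g n y = g n (f n a \<otimes>\<^bsub>grp B n\<^esub> inv\<^bsub>grp B n\<^esub> dif B (n - 1) b)"
    using gy cbw dif_cycle_map[OF B C g bB w] aA bB by simp
  then have "y = cycle_map B f n (a, b)"
    using inj yB aA bB by (simp add: inj_on_def cycle_map_def)
  then show "y \<in> cycle_map B f n ` (S \<times> V)"
    using a b by blast
qed

lemma quasi_open_nhds_cancel_embedding:
  assumes A: "is_complex A" and B: "is_complex B" and C: "is_complex C"
    and f: "cplx_hom A B f" and g: "cplx_hom B C g"
    and emb: "embedding_map (top B (n - 1)) (top C (n - 1)) (g (n - 1))"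
    and inj: "inj_on (g n) (carrier (grp B n))"
    and qz: "quasi_open zero_cplx (quot_cplx C B g) (zero_hom (quot_cplx C B g))"
    and qgf: "quasi_open_nhds A C (cplx_comp g f) n"
  shows "quasi_open_nhds A B f n"
  unfolding quasi_open_nhds_def
proof (intro allI impI)
  fix U V assume U: "openin (top A n) U" "\<one>\<^bsub>grp A n\<^esub> \<in> U"
    and V: "openin (top B (n - 1)) V" "\<one>\<^bsub>grp B (n - 1)\<^esub> \<in> V"
  have "\<one>\<^bsub>grp C (n - 1 - 1)\<^esub> \<in> topspace (top C (n - 1 - 1))"
    unfolding is_complex_topspace[OF C] by (rule is_complex_one_closed[OF C])
  then obtain P where P: "openin (top C (n - 1)) P" "\<one>\<^bsub>grp C (n - 1)\<^esub> \<in> P"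
    "\<And>z. z \<in> P \<Longrightarrow> dif C (n - 1) z \<in> g (n - 1 + 1) ` carrier (grp B (n - 1 + 1)) \<Longrightarrow>
       z \<in> cycle_map C g (n - 1) ` (V \<times> topspace (top C (n - 1 - 1)))"
    using quasi_open_zero_quot_cplx_lift_embedding[OF B C g emb qz V openin_topspace] by blast
  obtain NC where NC: "openin (top C n) NC" "\<one>\<^bsub>grp C n\<^esub> \<in> NC"
    "NC \<inter> cycles C n \<subseteq> cycle_map C (cplx_comp g f) n ` ((U \<inter> cycles A n) \<times> P)"
    using qgf U P(1,2) unfolding quasi_open_nhds_def by blast
  define N where "N = {y \<in> carrier (grp B n). g n y \<in> NC}"
  have "openin (top B n) N"
    using openin_continuous_map_preimage[OF cplx_hom_continuous[OF g] NC(1)]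
    by (simp add: N_def is_complex_topspace[OF B])
  moreover have "\<one>\<^bsub>grp B n\<^esub> \<in> N"
    using NC(2) group_hom.hom_one[OF cplx_hom_group_hom[OF B C g]] is_complex_one_closed[OF B]
    by (simp add: N_def)
  moreover have "N \<inter> cycles B n
      \<subseteq> {y \<in> carrier (grp B n). g n y \<in> cycle_map C (cplx_comp g f) n ` ((U \<inter> cycles A n) \<times> P)}"
    using NC(3) cplx_hom_cycles[OF B C g] by (auto simp: N_def)
  moreover have "\<dots> \<subseteq> cycle_map B f n ` ((U \<inter> cycles A n) \<times> V)"
    using P(3) openin_subset[OF V(1)] openin_subset[OF P(1)]
    by (intro cycle_map_comp_preimage_subset[OF A B C f g inj])
      (auto simp: cycles_def is_complex_topspace B C)
  ultimately show "\<exists>N. openin (top B n) N \<and> \<one>\<^bsub>grp B n\<^esub> \<in> N \<and>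
      N \<inter> cycles B n \<subseteq> cycle_map B f n ` ((U \<inter> cycles A n) \<times> V)"
    by blast
qed

lemma embedding_map_cplx_inj_on:
  "is_complex B \<Longrightarrow> embedding_map (top B n) Y h \<Longrightarrow> inj_on h (carrier (grp B n))"
  using homeomorphic_imp_injective_map by (fastforce simp: embedding_map_def is_complex_topspace)

lemma quasi_open_embedding:
  assumes "is_complex B" "is_complex C" "cplx_hom B C g"
    and "\<And>n. embedding_map (top B n) (top C n) (g n)"
    and "quasi_open zero_cplx (quot_cplx C B g) (zero_hom (quot_cplx C B g))"
  shows "quasi_open B C g"
proof -
  have "quasi_open_nhds B C g n" for n
    using quasi_open_nhds_embedding[OF assms(1-3) assms(4)[of n]
        embedding_map_cplx_inj_on[OF assms(1) assms(4)[of "n + 1"]] assms(5)] .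
  with assms(1-3) show ?thesis by (simp add: quasi_open_iff_quasi_open_nhds)
qed

lemma quasi_open_cancel_embedding:
  assumes "is_complex A" "is_complex B" "is_complex C" "cplx_hom A B f" "cplx_hom B C g"
    and "\<And>n. embedding_map (top B n) (top C n) (g n)"
    and "quasi_open zero_cplx (quot_cplx C B g) (zero_hom (quot_cplx C B g))"
    and "quasi_open A C (cplx_comp g f)"
  shows "quasi_open A B f"
proof -
  have "quasi_open_nhds A C (cplx_comp g f) n" for n
    using assms(8) quasi_open_iff_quasi_open_nhds[OF assms(1,3) cplx_hom_comp[OF assms(1,2,4,5)]] by blast
  then have "quasi_open_nhds A B f n" for n
    using quasi_open_nhds_cancel_embedding[OF assms(1-5) assms(6)[of "n - 1"]
        embedding_map_cplx_inj_on[OF assms(2) assms(6)[of n]] assms(7)] by blast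
  with assms(1,2,4) show ?thesis by (simp add: quasi_open_iff_quasi_open_nhds)
qed

theorem proposition2p3:
  fixes A :: "'a cplx" and B :: "'b cplx" and C :: "'c cplx"
    and \<phi> :: "int \<Rightarrow> 'a \<Rightarrow> 'b" and \<psi> :: "int \<Rightarrow> 'b \<Rightarrow> 'c"
  assumes "is_complex A" and "is_complex B" and "is_complex C"
    and "cplx_hom A B \<phi>" and "cplx_hom B C \<psi>"
  shows "(quasi_open A B \<phi> \<and> quasi_open B C \<psi> \<longrightarrow> quasi_open A C (cplx_comp \<psi> \<phi>))
    \<and> ((\<forall>n. embedding_map (top B n) (top C n) (\<psi> n))
        \<and> quasi_open zero_cplx (quot_cplx C B \<psi>) (zero_hom (quot_cplx C B \<psi>))
        \<longrightarrow> quasi_open B C \<psi>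
            \<and> (quasi_open A C (cplx_comp \<psi> \<phi>) \<longrightarrow> quasi_open A B \<phi>))"
  using quasi_open_comp[OF assms] quasi_open_embedding[OF assms(2,3,5)]
    quasi_open_cancel_embedding[OF assms]
  by blast

end
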